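(* There exist $w>0$, an integer $n\ge 3$, a convex symmetric body $K\subseteq\mathbb{R}^n$ and $t\in(0,1)$ such that $w(K)=w$, $\gamma_n(K)=\gamma_n(C)$ where $C=B_2^2(0,w)\times\mathbb{R}^{n-2}$ (so that $w(C)=w$ as well), but \[ \gamma_n(tK)>\gamma_n(tC)=\gamma_2(B_2^2(0,tw)). \] In particular, it is false that every convex symmetric body with the same Gaussian measure and inradius as a cylinder $B_2^k(0,w)\times\mathbb{R}^l$ satisfies $\gamma(tK)\le\gamma_{k+l}(tC)$ for all $t\in(0,1)$.
   Context: $\gamma_n$ denotes the standard Gaussian probability measure on $\mathbb{R}^n$, $B_2^k(0,r)=\{x\in\mathbb{R}^k:|x|\le r\}$. A convex body is symmetric if $K=-K$. The inradius is $w(K)=\sup\{r>0:B(0,r)\subseteq K\}$ with $B(0,r)$ the Euclidean ball of radius $r$ centered at $0$. *)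

theory Defs
  imports "HOL-Analysis.Analysis" "HOL-Probability.Probability"
begin

text \<open>Euclidean space R^n is modelled as the functions nat => real that vanish
  at every coordinate i >= n (coordinates 0..n-1 are the n real coordinates).
  Topology on nat => real is the product topology, which restricted to this
  closed subspace coincides with the Euclidean topology.\<close>

definition Rn :: "nat \<Rightarrow> (nat \<Rightarrow> real) set" where
  "Rn n = {x. \<forall>i\<ge>n. x i = 0}"

definition enorm :: "nat \<Rightarrow> (nat \<Rightarrow> real) \<Rightarrow> real" where
  "enorm n x = sqrt (\<Sum>i<n. (x i)\<^sup>2)"

definition cball_n :: "nat \<Rightarrow> (nat \<Rightarrow> real) \<Rightarrow> real \<Rightarrow> (nat \<Rightarrow> real) set" where
  "cball_n n c r = {x \<in> Rn n. enorm n (\<lambda>i. x i - c i) \<le> r}"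

definition B2 :: "nat \<Rightarrow> real \<Rightarrow> (nat \<Rightarrow> real) set" where
  "B2 n r = cball_n n (\<lambda>_. 0) r"

definition dil :: "real \<Rightarrow> (nat \<Rightarrow> real) set \<Rightarrow> (nat \<Rightarrow> real) set" where
  "dil t K = (\<lambda>x. \<lambda>i. t * x i) ` K"

definition convex_n :: "nat \<Rightarrow> (nat \<Rightarrow> real) set \<Rightarrow> bool" where
  "convex_n n K \<longleftrightarrow> K \<subseteq> Rn n \<and>
     (\<forall>x\<in>K. \<forall>y\<in>K. \<forall>u::real. 0 \<le> u \<and> u \<le> 1 \<longrightarrow> (\<lambda>i. u * x i + (1 - u) * y i) \<in> K)"

definition convex_body :: "nat \<Rightarrow> (nat \<Rightarrow> real) set \<Rightarrow> bool" where
  "convex_body n K \<longleftrightarrow> convex_n n K \<and> closed K \<and> (\<exists>c\<in>K. \<exists>r>0. cball_n n c r \<subseteq> K)"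

definition symmetric_set :: "(nat \<Rightarrow> real) set \<Rightarrow> bool" where
  "symmetric_set K \<longleftrightarrow> uminus ` K = K"

definition inradius :: "nat \<Rightarrow> (nat \<Rightarrow> real) set \<Rightarrow> real" where
  "inradius n K = Sup {r. r > 0 \<and> B2 n r \<subseteq> K}"

definition gauss_meas :: "nat \<Rightarrow> (nat \<Rightarrow> real) measure" where
  "gauss_meas n = PiM {..<n} (\<lambda>_. density lborel std_normal_density)"

definition gamma :: "nat \<Rightarrow> (nat \<Rightarrow> real) set \<Rightarrow> real" where
  "gamma n A = measure (gauss_meas n)
     {x \<in> space (gauss_meas n). (\<lambda>i. if i < n then x i else 0) \<in> A}"

definition cyl :: "nat \<Rightarrow> real \<Rightarrow> (nat \<Rightarrow> real) set" where
  "cyl n w = {x \<in> Rn n. enorm 2 x \<le> w}"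

end

theory Submission
  imports Defs "HOL-Real_Asymp.Real_Asymp"
begin

text \<open>
  Take \<open>n = 3\<close>, \<open>w = 8\<close> and for \<open>K\<close> the double cone \<open>\<rho> \<le> A - (15/8) \<bar>x\<^sub>0\<bar>\<close> around the
  \<open>x\<^sub>0\<close>-axis (\<open>\<rho>\<close> the distance to the axis), truncated by the slab \<open>\<bar>x\<^sub>0\<bar> \<le> 8\<close>.
  For \<open>A \<ge> 17\<close> the slab, not the cone, touches the largest centred ball, so \<open>w(K) = 8\<close>.
  Integrating over the disc sections first, \<open>\<gamma>\<^sub>3(K) = \<integral>\<^bsub>\<bar>a\<bar>\<le>8\<^esub> \<phi>(a) (1 - e\<^bsup>-(A - 15\<bar>a\<bar>/8)\<^sup>2/2\<^esup>) da\<close>,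
  which after completing the square is an explicit expression in \<open>\<Phi>\<close>; by the intermediate value
  theorem it equals \<open>\<gamma>\<^sub>3(C) = 1 - e\<^sup>-\<^sup>3\<^sup>2\<close> for some \<open>A \<in> [17, 25]\<close>.
  Dilating by \<open>t = 3/8\<close> turns \<open>C\<close> into the cylinder of radius 3, of measure \<open>1 - e\<^bsup>-9/2\<^esup>\<close>,
  while \<open>tK\<close> contains the truncated cone with \<open>A = 51/8\<close> and half-width 3, whose measure
  exceeds \<open>1 - e\<^bsup>-9/2\<^esup>\<close> by the Gaussian tail bounds.
\<close>

section \<open>The standard normal distribution\<close>

abbreviation \<phi> :: "real \<Rightarrow> real" where
  "\<phi> \<equiv> std_normal_density"

abbreviation \<Phi> :: "real \<Rightarrow> real" where
  "\<Phi> \<equiv> cdf std_normal_distribution"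

interpretation std_normal: real_distribution std_normal_distribution
  by (rule real_dist_normal_dist)

lemma std_normal_density_minus [simp]: "\<phi> (- x) = \<phi> x"
  by (simp add: std_normal_density_def)

lemma has_real_derivative_std_normal_density: "(\<phi> has_real_derivative - x * \<phi> x) (at x)"
  unfolding std_normal_density_def by (auto intro!: derivative_eq_intros simp: field_simps)

lemma tendsto_std_normal_density_at_top: "(\<phi> \<longlongrightarrow> 0) at_top"
  unfolding std_normal_density_def by real_asymp

lemma emeasure_std_normal:
  "A \<in> sets borel \<Longrightarrow> emeasure std_normal_distribution A = (\<integral>\<^sup>+x. ennreal (\<phi> x) * indicator A x \<partial>lborel)"
  by (subst emeasure_density) (auto intro!: nn_integral_cong simp: mult.commute)

lemma measure_std_normal_singleton [simp]: "measure std_normal_distribution {x} = 0"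
proof -
  have "emeasure std_normal_distribution {x} = (\<integral>\<^sup>+y. ennreal (\<phi> x) * indicator {x} y \<partial>lborel)"
    by (subst emeasure_std_normal) (auto intro!: nn_integral_cong split: split_indicator)
  then show ?thesis
    by (simp add: measure_def)
qed

lemma isCont_Phi: "isCont \<Phi> x"
  by (simp add: std_normal.isCont_cdf)

lemma measure_std_normal_lessThan: "measure std_normal_distribution {..<a} = \<Phi> a"
proof -
  have "{..a} = {..<a} \<union> {a}" by auto
  then show ?thesis
    using std_normal.finite_measure_Union[of "{..<a}" "{a}"] by (simp add: cdf_def)
qed

lemma measure_std_normal_atLeast: "measure std_normal_distribution {a..} = 1 - \<Phi> a"
proof -
  have "{a..} = space std_normal_distribution - {..<a}" by auto
  then show ?thesis
    using std_normal.prob_compl[of "{..<a}"] by (simp add: measure_std_normal_lessThan)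
qed

lemma measure_std_normal_Icc: "a \<le> b \<Longrightarrow> measure std_normal_distribution {a..b} = \<Phi> b - \<Phi> a"
proof -
  assume "a \<le> b"
  then have "{a..b} = {..b} - {..<a}" "{..<a} \<subseteq> {..b}" by auto
  then show ?thesis
    by (simp add: std_normal.finite_measure_Diff measure_std_normal_lessThan cdf_def)
qed

lemma Phi_minus: "\<Phi> (- x) = 1 - \<Phi> x"
proof -
  have "emeasure std_normal_distribution {..-x} = (\<integral>\<^sup>+s. ennreal (\<phi> s) * indicator {..-x} s \<partial>lborel)"
    by (simp add: emeasure_std_normal)
  also have "\<dots> = (\<integral>\<^sup>+s. ennreal (\<phi> (- s)) * indicator {..-x} (- s) \<partial>lborel)"
    using nn_integral_real_affine[of "\<lambda>s. ennreal (\<phi> s) * indicator {..-x} s" "-1" 0] by simp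
  also have "\<dots> = emeasure std_normal_distribution {x..}"
    by (auto simp: emeasure_std_normal intro!: nn_integral_cong split: split_indicator)
  finally have "measure std_normal_distribution {..-x} = measure std_normal_distribution {x..}"
    by (simp add: measure_def)
  then show ?thesis
    by (simp add: cdf_def measure_std_normal_atLeast)
qed

lemma Phi_0: "\<Phi> 0 = 1 / 2"
  using Phi_minus[of 0] by simp

lemma std_normal_tail_upper:
  assumes x: "0 < x"
  shows "1 - \<Phi> x \<le> \<phi> x / x"
proof -
  have "emeasure std_normal_distribution {x..} = (\<integral>\<^sup>+s. ennreal (\<phi> s) * indicator {x..} s \<partial>lborel)"
    by (simp add: emeasure_std_normal)
  also have "\<dots> \<le> (\<integral>\<^sup>+s. ennreal (s * \<phi> s / x) * indicator {x..} s \<partial>lborel)"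
  proof (intro nn_integral_mono)
    fix s
    have "\<phi> s \<le> s * \<phi> s / x" if "x \<le> s"
      using that x by (simp add: field_simps mult_right_mono)
    then show "ennreal (\<phi> s) * indicator {x..} s \<le> ennreal (s * \<phi> s / x) * indicator {x..} s"
      by (simp add: ennreal_leI split: split_indicator)
  qed
  also have "\<dots> = ennreal (0 - (- \<phi> x / x))"
  proof (rule nn_integral_FTC_atLeast[where F="\<lambda>s. - \<phi> s / x"])
    show "((\<lambda>s. - \<phi> s / x) \<longlongrightarrow> 0) at_top"
      using tendsto_divide[OF tendsto_minus[OF tendsto_std_normal_density_at_top] tendsto_const[of x]] x
      by simp
    show "((\<lambda>s. - \<phi> s / x) has_real_derivative s * \<phi> s / x) (at s)" for s
      using has_real_derivative_std_normal_density[of s] x by (auto intro!: derivative_eq_intros)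
    show "0 \<le> s * \<phi> s / x" if "x \<le> s" for s
      using that x by simp
  qed simp
  finally show ?thesis
    using x by (simp add: measure_def enn2real_leI flip: measure_std_normal_atLeast)
qed

lemma std_normal_tail_lower:
  assumes x: "0 < x" "3 \<le> x ^ 4"
  shows "\<phi> x * (1 / x - 1 / x ^ 3) \<le> 1 - \<Phi> x"
proof -
  let ?F = "\<lambda>s. - (\<phi> s * (1 / s - 1 / s ^ 3))"
  let ?f = "\<lambda>s. \<phi> s * (1 - 3 / s ^ 4)"
  have pow: "3 / s ^ 4 \<le> 1" if "x \<le> s" for s
  proof -
    have "3 \<le> s ^ 4"
      using x power_mono[OF that, of 4] by linarith
    then show ?thesis
      by (simp add: divide_le_eq)
  qed
  have "ennreal (0 - ?F x) = (\<integral>\<^sup>+s. ennreal (?f s) * indicator {x..} s \<partial>lborel)"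
  proof (rule nn_integral_FTC_atLeast[symmetric])
    have "((\<lambda>s::real. 1 / s - 1 / s ^ 3) \<longlongrightarrow> 0) at_top"
      by real_asymp
    then show "(?F \<longlongrightarrow> 0) at_top"
      using tendsto_minus[OF tendsto_mult[OF tendsto_std_normal_density_at_top]] by fastforce
    show "(?F has_real_derivative ?f s) (at s)" if "x \<le> s" for s
    proof -
      have s: "s \<noteq> 0" using x that by simp
      have "((\<lambda>s. 1 / s - 1 / s ^ 3) has_real_derivative (- 1 / s\<^sup>2 + 3 / s ^ 4)) (at s)"
        using s by (auto intro!: derivative_eq_intros simp: field_simps eval_nat_numeral)
      from DERIV_minus[OF DERIV_mult[OF has_real_derivative_std_normal_density this]]
      show ?thesis
        by (rule DERIV_cong) (use s in \<open>simp add: field_simps eval_nat_numeral\<close>)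
    qed
    show "0 \<le> ?f s" if "x \<le> s" for s
      using pow[OF that] by simp
  qed simp
  also have "\<dots> \<le> (\<integral>\<^sup>+s. ennreal (\<phi> s) * indicator {x..} s \<partial>lborel)"
  proof (intro nn_integral_mono)
    show "ennreal (?f s) * indicator {x..} s \<le> ennreal (\<phi> s) * indicator {x..} s" for s
      using pow[of s] by (auto intro!: ennreal_leI mult_left_le split: split_indicator)
  qed
  also have "\<dots> = ennreal (1 - \<Phi> x)"
    by (simp add: emeasure_std_normal[symmetric] std_normal.emeasure_eq_measure measure_std_normal_atLeast)
  finally show ?thesis
    using std_normal.cdf_bounded_prob[of x] by simp
qed

lemma Phi_diff_Phi_minus_ge: "0 < x \<Longrightarrow> 1 - 2 * (\<phi> x / x) \<le> \<Phi> x - \<Phi> (- x)"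
  using std_normal_tail_upper[of x] by (simp add: Phi_minus)

lemma Phi_diff_Phi_minus_le:
  "0 < x \<Longrightarrow> 3 \<le> x ^ 4 \<Longrightarrow> \<Phi> x - \<Phi> (- x) \<le> 1 - 2 * (\<phi> x * (1 / x - 1 / x ^ 3))"
  using std_normal_tail_lower[of x] by (simp add: Phi_minus)

lemma exp_minus_le_quadratic:
  fixes u :: real
  assumes u: "0 \<le> u"
  shows "exp (- u) \<le> 1 - u + u\<^sup>2 / 2"
proof -
  let ?g = "\<lambda>u::real. 1 - u + u\<^sup>2 / 2 - exp (- u)"
  have "?g 0 \<le> ?g u"
  proof (rule DERIV_nonneg_imp_nondecreasing[OF u])
    fix t :: real
    have "(?g has_real_derivative (-1 + t + exp (- t))) (at t)"
      by (auto intro!: derivative_eq_intros simp: power2_eq_square)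
    moreover have "0 \<le> -1 + t + exp (- t)"
      using exp_ge_add_one_self[of "- t"] by simp
    ultimately show "\<exists>y. (?g has_real_derivative y) (at t) \<and> 0 \<le> y"
      by blast
  qed
  then show ?thesis
    by simp
qed

lemma Phi_le_Taylor:
  assumes x: "0 \<le> x"
  shows "\<Phi> x \<le> 1 / 2 + (x - x ^ 3 / 6 + x ^ 5 / 40) / sqrt (2 * pi)"
proof -
  let ?P = "\<lambda>s::real. (s - s ^ 3 / 6 + s ^ 5 / 40) / sqrt (2 * pi)"
  let ?p = "\<lambda>s::real. (1 - s\<^sup>2 / 2 + s ^ 4 / 8) / sqrt (2 * pi)"
  have p_nonneg: "0 \<le> ?p s" for s
  proof -
    have "0 \<le> (s\<^sup>2 - 2)\<^sup>2 + 4" by simp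
    then show ?thesis
      by (simp add: power2_eq_square power4_eq_xxxx field_simps)
  qed
  have "emeasure std_normal_distribution {0..x} = (\<integral>\<^sup>+s. ennreal (\<phi> s) * indicator {0..x} s \<partial>lborel)"
    by (simp add: emeasure_std_normal)
  also have "\<dots> \<le> (\<integral>\<^sup>+s. ennreal (?p s) * indicator {0..x} s \<partial>lborel)"
  proof (intro nn_integral_mono)
    fix s :: real
    have "exp (- (s\<^sup>2 / 2)) \<le> 1 - s\<^sup>2 / 2 + (s\<^sup>2 / 2)\<^sup>2 / 2"
      by (rule exp_minus_le_quadratic) simp
    then have "\<phi> s \<le> ?p s"
      by (simp add: std_normal_density_def divide_right_mono power2_eq_square power4_eq_xxxx)
    then show "ennreal (\<phi> s) * indicator {0..x} s \<le> ennreal (?p s) * indicator {0..x} s"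
      by (simp add: ennreal_leI split: split_indicator)
  qed
  also have "\<dots> = ennreal (?P x - ?P 0)"
  proof (rule nn_integral_FTC_Icc)
    show "(?P has_real_derivative ?p s) (at s)" for s
      by (auto intro!: derivative_eq_intros simp: field_simps eval_nat_numeral)
  qed (use x p_nonneg in simp_all)
  moreover have "0 \<le> ?P x"
  proof -
    have "0 \<le> 1 - x\<^sup>2 / 6 + x ^ 4 / 40"
      using sum_power2_ge_zero[of "x\<^sup>2 - 10 / 3" 1] by (simp add: power2_eq_square power4_eq_xxxx field_simps)
    then have "0 \<le> x * (1 - x\<^sup>2 / 6 + x ^ 4 / 40)"
      using x by simp
    then show ?thesis
      by (simp add: algebra_simps eval_nat_numeral)
  qed
  ultimately have "measure std_normal_distribution {0..x} \<le> ?P x"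
    by (simp add: std_normal.emeasure_eq_measure)
  then show ?thesis
    using measure_std_normal_Icc[OF x] Phi_0 by simp
qed

section \<open>The Gaussian measure of a disc in the plane\<close>

lemma nn_integral_lborel_even:
  fixes h :: "real \<Rightarrow> ennreal"
  assumes [measurable]: "h \<in> borel_measurable borel" and even: "\<And>x. h (- x) = h x"
  shows "(\<integral>\<^sup>+x. h x \<partial>lborel) = 2 * (\<integral>\<^sup>+x. h x * indicator {0<..} x \<partial>lborel)"
proof -
  have "(\<integral>\<^sup>+x. h x \<partial>lborel) = (\<integral>\<^sup>+x. h x * indicator {0<..} x + h x * indicator {..<0} x \<partial>lborel)"
    by (intro nn_integral_cong_AE, rule eventually_mono[OF AE_lborel_singleton[of 0]])
      (auto split: split_indicator)
  also have "\<dots> = (\<integral>\<^sup>+x. h x * indicator {0<..} x \<partial>lborel) + (\<integral>\<^sup>+x. h x * indicator {..<0} x \<partial>lborel)"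
    by (rule nn_integral_add) measurable
  also have "(\<integral>\<^sup>+x. h x * indicator {..<0} x \<partial>lborel) = (\<integral>\<^sup>+x. h (- x) * indicator {..<0} (- x) \<partial>lborel)"
    using nn_integral_real_affine[of "\<lambda>x. h x * indicator {..<0} x" "-1" 0] by simp
  also have "\<dots> = (\<integral>\<^sup>+x. h x * indicator {0<..} x \<partial>lborel)"
    by (auto simp: even intro!: nn_integral_cong split: split_indicator)
  finally show ?thesis
    by (simp add: mult_2)
qed

lemma nn_integral_gaussian_radial:
  fixes r c :: real
  assumes r: "0 \<le> r" and c: "0 < c"
  shows "(\<integral>\<^sup>+x. ennreal (x * exp (- (x\<^sup>2 * c) / 2)) * indicator {0<..} x * indicator {..r\<^sup>2} (x\<^sup>2 * c) \<partial>lborel)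
    = ennreal ((1 - exp (- r\<^sup>2 / 2)) / c)"
proof -
  define u where "u = r / sqrt c"
  have u: "0 \<le> u" "u\<^sup>2 * c = r\<^sup>2"
    using r c by (simp_all add: u_def power_divide)
  have le_iff: "x\<^sup>2 * c \<le> r\<^sup>2 \<longleftrightarrow> x \<le> u" if "0 < x" for x
  proof -
    have "x\<^sup>2 * c \<le> r\<^sup>2 \<longleftrightarrow> x\<^sup>2 \<le> u\<^sup>2"
      using c by (simp flip: u(2))
    then show ?thesis
      using that u(1) abs_le_square_iff[of x u] by simp
  qed
  have "(\<integral>\<^sup>+x. ennreal (x * exp (- (x\<^sup>2 * c) / 2)) * indicator {0<..} x * indicator {..r\<^sup>2} (x\<^sup>2 * c) \<partial>lborel)
      = (\<integral>\<^sup>+x. ennreal (x * exp (- (x\<^sup>2 * c) / 2)) * indicator {0..u} x \<partial>lborel)"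
    by (intro nn_integral_cong_AE, rule eventually_mono[OF AE_lborel_singleton[of 0]])
      (auto simp: le_iff split: split_indicator)
  also have "\<dots> = ennreal ((\<lambda>x. - exp (- (x\<^sup>2 * c) / 2) / c) u - (\<lambda>x. - exp (- (x\<^sup>2 * c) / 2) / c) 0)"
    by (rule nn_integral_FTC_Icc) (use u(1) c in \<open>auto intro!: derivative_eq_intros simp: field_simps\<close>)
  also have "\<dots> = ennreal ((1 - exp (- r\<^sup>2 / 2)) / c)"
    using u(2) c by (simp add: field_simps)
  finally show ?thesis .
qed

lemma nn_integral_gaussian_slope_substitution:
  fixes x r :: real
  assumes x: "0 < x"
  shows "(\<integral>\<^sup>+y. ennreal (exp (- (x\<^sup>2 + y\<^sup>2) / 2)) * indicator {..r\<^sup>2} (x\<^sup>2 + y\<^sup>2) * indicator {0<..} y \<partial>lborel)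
    = (\<integral>\<^sup>+s. ennreal (x * exp (- (x\<^sup>2 * (1 + s\<^sup>2)) / 2)) * indicator {..r\<^sup>2} (x\<^sup>2 * (1 + s\<^sup>2))
        * indicator {0<..} s \<partial>lborel)"
proof -
  let ?g = "\<lambda>y. ennreal (exp (- (x\<^sup>2 + y\<^sup>2) / 2)) * indicator {..r\<^sup>2} (x\<^sup>2 + y\<^sup>2) * indicator {0<..} y"
  have "(\<integral>\<^sup>+y. ?g y \<partial>lborel) = ennreal x * (\<integral>\<^sup>+s. ?g (x * s) \<partial>lborel)"
    using nn_integral_real_affine[of ?g x 0] x by simp
  also have "\<dots> = (\<integral>\<^sup>+s. ennreal x * ?g (x * s) \<partial>lborel)"
    by (rule nn_integral_cmult[symmetric]) measurable
  also have "\<dots> = (\<integral>\<^sup>+s. ennreal (x * exp (- (x\<^sup>2 * (1 + s\<^sup>2)) / 2)) * indicator {..r\<^sup>2} (x\<^sup>2 * (1 + s\<^sup>2))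
      * indicator {0<..} s \<partial>lborel)"
  proof (intro nn_integral_cong)
    fix s :: real
    have "x\<^sup>2 + (x * s)\<^sup>2 = x\<^sup>2 * (1 + s\<^sup>2)"
      by (simp add: algebra_simps power_mult_distrib)
    moreover have "0 < x * s \<longleftrightarrow> 0 < s"
      using x by (simp add: zero_less_mult_iff)
    ultimately show "ennreal x * ?g (x * s) = ennreal (x * exp (- (x\<^sup>2 * (1 + s\<^sup>2)) / 2))
        * indicator {..r\<^sup>2} (x\<^sup>2 * (1 + s\<^sup>2)) * indicator {0<..} s"
      using x by (auto simp: ennreal_mult[symmetric] split: split_indicator)
  qed
  finally show ?thesis .
qed

text \<open>After the substitution \<open>y = x s\<close> and Fubini, the \<open>x\<close>-integral is elementary and the
  \<open>s\<close>-integral is \<open>\<integral>\<^sub>0\<^sup>\<infinity> ds / (1 + s\<^sup>2) = \<pi> / 2\<close>.\<close>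

lemma nn_integral_gaussian_quarter_disc:
  fixes r :: real
  assumes r: "0 \<le> r"
  shows "(\<integral>\<^sup>+x. (\<integral>\<^sup>+y. ennreal (exp (- (x\<^sup>2 + y\<^sup>2) / 2)) * indicator {..r\<^sup>2} (x\<^sup>2 + y\<^sup>2) * indicator {0<..} y
      \<partial>lborel) * indicator {0<..} x \<partial>lborel) = ennreal (pi / 2 * (1 - exp (- r\<^sup>2 / 2)))"
proof -
  let ?G = "\<lambda>x s. ennreal (x * exp (- (x\<^sup>2 * (1 + s\<^sup>2)) / 2)) * indicator {..r\<^sup>2} (x\<^sup>2 * (1 + s\<^sup>2))
      * indicator {0<..} s * indicator {0<..} x"
  have slope: "(\<integral>\<^sup>+y. ennreal (exp (- (x\<^sup>2 + y\<^sup>2) / 2)) * indicator {..r\<^sup>2} (x\<^sup>2 + y\<^sup>2) * indicator {0<..} y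
      \<partial>lborel) * indicator {0<..} x = (\<integral>\<^sup>+s. ?G x s \<partial>lborel)" for x :: real
  proof (cases "0 < x")
    case True
    then show ?thesis
      using nn_integral_gaussian_slope_substitution[OF True, of r] by simp
  qed simp
  have radial: "(\<integral>\<^sup>+x. ?G x s \<partial>lborel) = ennreal ((1 - exp (- r\<^sup>2 / 2)) / (1 + s\<^sup>2)) * indicator {0<..} s"
    for s :: real
  proof -
    have "(\<integral>\<^sup>+x. ?G x s \<partial>lborel) = (\<integral>\<^sup>+x. ennreal (x * exp (- (x\<^sup>2 * (1 + s\<^sup>2)) / 2)) * indicator {0<..} x
        * indicator {..r\<^sup>2} (x\<^sup>2 * (1 + s\<^sup>2)) \<partial>lborel) * indicator {0<..} s"
      by (subst nn_integral_multc[symmetric]) (measurable, auto intro!: nn_integral_cong simp: ac_simps)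
    then show ?thesis
      using nn_integral_gaussian_radial[OF r, of "1 + s\<^sup>2"] by (simp add: add_pos_nonneg)
  qed
  have "(\<integral>\<^sup>+x. (\<integral>\<^sup>+y. ennreal (exp (- (x\<^sup>2 + y\<^sup>2) / 2)) * indicator {..r\<^sup>2} (x\<^sup>2 + y\<^sup>2) * indicator {0<..} y
      \<partial>lborel) * indicator {0<..} x \<partial>lborel) = (\<integral>\<^sup>+x. \<integral>\<^sup>+s. ?G x s \<partial>lborel \<partial>lborel)"
    by (simp only: slope)
  also have "\<dots> = (\<integral>\<^sup>+s. \<integral>\<^sup>+x. ?G x s \<partial>lborel \<partial>lborel)"
    by (rule lborel_pair.Fubini') measurable
  also have "\<dots> = (\<integral>\<^sup>+s. ennreal ((1 - exp (- r\<^sup>2 / 2)) / (1 + s\<^sup>2)) * indicator {0..} s \<partial>lborel)"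
    unfolding radial
    by (intro nn_integral_cong_AE, rule eventually_mono[OF AE_lborel_singleton[of 0]])
      (auto split: split_indicator)
  also have "\<dots> = ennreal ((1 - exp (- r\<^sup>2 / 2)) * (pi / 2) - (1 - exp (- r\<^sup>2 / 2)) * arctan 0)"
  proof (rule nn_integral_FTC_atLeast)
    show "((\<lambda>a. (1 - exp (- r\<^sup>2 / 2)) * arctan a) \<longlongrightarrow> (1 - exp (- r\<^sup>2 / 2)) * (pi / 2)) at_top"
      by (intro tendsto_intros) (simp_all add: tendsto_arctan_at_top)
  qed (auto intro!: derivative_eq_intros simp: add_nonneg_eq_0_iff field_simps power2_eq_square)
  finally show ?thesis
    by (simp add: mult.commute)
qed

lemma nn_integral_gaussian_disc:
  fixes r :: real
  assumes r: "0 \<le> r"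
  shows "(\<integral>\<^sup>+x. \<integral>\<^sup>+y. ennreal (exp (- (x\<^sup>2 + y\<^sup>2) / 2)) * indicator {..r\<^sup>2} (x\<^sup>2 + y\<^sup>2) \<partial>lborel \<partial>lborel)
    = ennreal (2 * pi * (1 - exp (- r\<^sup>2 / 2)))"
proof -
  let ?g = "\<lambda>x y. ennreal (exp (- (x\<^sup>2 + y\<^sup>2) / 2)) * indicator {..r\<^sup>2} (x\<^sup>2 + y\<^sup>2)"
  have even_y: "(\<integral>\<^sup>+y. ?g x y \<partial>lborel) = 2 * (\<integral>\<^sup>+y. ?g x y * indicator {0<..} y \<partial>lborel)" for x
    by (rule nn_integral_lborel_even) auto
  have "(\<integral>\<^sup>+x. \<integral>\<^sup>+y. ?g x y \<partial>lborel \<partial>lborel) = 2 * (\<integral>\<^sup>+x. \<integral>\<^sup>+y. ?g x y * indicator {0<..} y \<partial>lborel \<partial>lborel)"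
    unfolding even_y by (rule nn_integral_cmult) measurable
  also have "(\<integral>\<^sup>+x. \<integral>\<^sup>+y. ?g x y * indicator {0<..} y \<partial>lborel \<partial>lborel)
      = 2 * (\<integral>\<^sup>+x. (\<integral>\<^sup>+y. ?g x y * indicator {0<..} y \<partial>lborel) * indicator {0<..} x \<partial>lborel)"
    by (rule nn_integral_lborel_even) measurable
  also have "\<dots> = 2 * ennreal (pi / 2 * (1 - exp (- r\<^sup>2 / 2)))"
    by (simp only: nn_integral_gaussian_quarter_disc[OF r])
  finally show ?thesis
    by (simp add: ennreal_mult[symmetric] del: ennreal_numeral flip: ennreal_numeral)
qed

lemma nn_integral_std_normal_disc:
  fixes r :: real
  assumes r: "0 \<le> r"
  shows "(\<integral>\<^sup>+x. \<integral>\<^sup>+y. indicator {..r\<^sup>2} (x\<^sup>2 + y\<^sup>2) \<partial>std_normal_distribution \<partial>std_normal_distribution)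
    = ennreal (1 - exp (- r\<^sup>2 / 2))"
proof -
  let ?g = "\<lambda>x y. ennreal (exp (- (x\<^sup>2 + y\<^sup>2) / 2)) * indicator {..r\<^sup>2} (x\<^sup>2 + y\<^sup>2)"
  have density: "\<phi> x * \<phi> y = 1 / (2 * pi) * exp (- (x\<^sup>2 + y\<^sup>2) / 2)" for x y
    by (simp add: std_normal_density_def field_simps mult_exp_exp real_sqrt_mult[symmetric])
  have "(\<integral>\<^sup>+x. \<integral>\<^sup>+y. indicator {..r\<^sup>2} (x\<^sup>2 + y\<^sup>2) \<partial>std_normal_distribution \<partial>std_normal_distribution)
      = (\<integral>\<^sup>+x. ennreal (\<phi> x) * (\<integral>\<^sup>+y. ennreal (\<phi> y) * indicator {..r\<^sup>2} (x\<^sup>2 + y\<^sup>2) \<partial>lborel) \<partial>lborel)"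
    by (simp add: nn_integral_density)
  also have "\<dots> = (\<integral>\<^sup>+x. ennreal (1 / (2 * pi)) * (\<integral>\<^sup>+y. ?g x y \<partial>lborel) \<partial>lborel)"
  proof (intro nn_integral_cong)
    fix x :: real
    have "ennreal (\<phi> x) * (\<integral>\<^sup>+y. ennreal (\<phi> y) * indicator {..r\<^sup>2} (x\<^sup>2 + y\<^sup>2) \<partial>lborel)
        = (\<integral>\<^sup>+y. ennreal (\<phi> x) * (ennreal (\<phi> y) * indicator {..r\<^sup>2} (x\<^sup>2 + y\<^sup>2)) \<partial>lborel)"
      by (rule nn_integral_cmult[symmetric]) measurable
    also have "\<dots> = (\<integral>\<^sup>+y. ennreal (1 / (2 * pi)) * ?g x y \<partial>lborel)"
      by (intro nn_integral_cong) (simp add: ennreal_mult[symmetric] density mult.assoc[symmetric])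
    also have "\<dots> = ennreal (1 / (2 * pi)) * (\<integral>\<^sup>+y. ?g x y \<partial>lborel)"
      by (rule nn_integral_cmult) measurable
    finally show "ennreal (\<phi> x) * (\<integral>\<^sup>+y. ennreal (\<phi> y) * indicator {..r\<^sup>2} (x\<^sup>2 + y\<^sup>2) \<partial>lborel)
        = ennreal (1 / (2 * pi)) * (\<integral>\<^sup>+y. ?g x y \<partial>lborel)" .
  qed
  also have "\<dots> = ennreal (1 / (2 * pi)) * (\<integral>\<^sup>+x. \<integral>\<^sup>+y. ?g x y \<partial>lborel \<partial>lborel)"
    by (rule nn_integral_cmult) measurable
  also have "\<dots> = ennreal (1 / (2 * pi)) * ennreal (2 * pi * (1 - exp (- r\<^sup>2 / 2)))"
    by (simp only: nn_integral_gaussian_disc[OF r])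
  also have "\<dots> = ennreal (1 - exp (- r\<^sup>2 / 2))"
    by (simp flip: ennreal_mult)
  finally show ?thesis .
qed

section \<open>Products of standard normal distributions\<close>

lemma product_prob_space_std_normal: "product_prob_space (\<lambda>_::nat. std_normal_distribution)"
  by unfold_locales

lemma prob_space_gauss_meas: "prob_space (gauss_meas n)"
  unfolding gauss_meas_def by (intro prob_space_PiM std_normal.prob_space_axioms)

lemma measure_gauss_meas_restrict:
  assumes "m \<le> n" and S: "S \<in> sets (gauss_meas m)"
  shows "measure (gauss_meas n) {x \<in> space (gauss_meas n). restrict x {..<m} \<in> S} = measure (gauss_meas m) S"
proof -
  have restrict: "(\<lambda>x. restrict x {..<m}) \<in> gauss_meas n \<rightarrow>\<^sub>M gauss_meas m"
    unfolding gauss_meas_def using \<open>m \<le> n\<close> by (intro measurable_restrict_subset) auto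
  have "distr (gauss_meas n) (gauss_meas m) (\<lambda>x. restrict x {..<m}) = gauss_meas m"
    unfolding gauss_meas_def using \<open>m \<le> n\<close>
    by (intro product_prob_space.distr_PiM_restrict_finite[OF product_prob_space_std_normal]) auto
  with measure_distr[OF restrict S] show ?thesis
    by (simp add: vimage_def Int_def conj_commute)
qed

lemma measurable_std_normal_component:
  "i \<in> I \<Longrightarrow> (\<lambda>x. x i) \<in> borel_measurable (PiM I (\<lambda>_. std_normal_distribution))"
  using measurable_component_singleton[of i I "\<lambda>_. std_normal_distribution"]
  by (simp add: measurable_cong_sets[OF refl sets_density])

lemma measurable_gauss_meas_coords_2:
  "2 \<le> n \<Longrightarrow> (\<lambda>x. (x 0, x 1)) \<in> gauss_meas n \<rightarrow>\<^sub>M borel \<Otimes>\<^sub>M borel"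
  unfolding gauss_meas_def by (intro measurable_Pair measurable_std_normal_component) auto

lemma measurable_gauss_meas_coords_3:
  "(\<lambda>x. (x 0, x 1, x 2)) \<in> gauss_meas 3 \<rightarrow>\<^sub>M borel \<Otimes>\<^sub>M borel \<Otimes>\<^sub>M borel"
  unfolding gauss_meas_def by (intro measurable_Pair measurable_std_normal_component) auto

lemma emeasure_gauss_meas_3:
  assumes S: "S \<in> sets (borel \<Otimes>\<^sub>M borel \<Otimes>\<^sub>M borel)"
  shows "emeasure (gauss_meas 3) {x \<in> space (gauss_meas 3). (x 0, x 1, x 2) \<in> S}
    = (\<integral>\<^sup>+a. \<integral>\<^sup>+b. \<integral>\<^sup>+c. indicator S (a, b, c)
        \<partial>std_normal_distribution \<partial>std_normal_distribution \<partial>std_normal_distribution)"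
proof -
  interpret product_sigma_finite "\<lambda>_::nat. std_normal_distribution"
    using product_prob_space_std_normal by (simp add: product_prob_space_def)
  let ?N = "std_normal_distribution"
  have [measurable]: "S \<in> sets (borel \<Otimes>\<^sub>M borel \<Otimes>\<^sub>M borel)"
    by (fact S)
  have meas: "(\<lambda>x. indicator S (f (x 0), x 1, x 2) :: ennreal) \<in> borel_measurable (PiM I (\<lambda>_. ?N))"
    if "f \<in> borel_measurable borel" "0 \<in> I" "1 \<in> I" "2 \<in> I" for f :: "real \<Rightarrow> real" and I :: "nat set"
    using that by (intro measurable_compose[OF _ borel_measurable_indicator[OF S]] measurable_Pair
        measurable_compose[OF measurable_std_normal_component] measurable_std_normal_component) auto
  have set: "{x \<in> space (gauss_meas 3). (x 0, x 1, x 2) \<in> S} \<in> sets (gauss_meas 3)"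
    using measurable_sets[OF measurable_gauss_meas_coords_3 S] by (simp add: vimage_def Int_def conj_commute)
  have I: "{..<3::nat} = insert 0 (insert 1 {2})"
    by auto
  have "emeasure (gauss_meas 3) {x \<in> space (gauss_meas 3). (x 0, x 1, x 2) \<in> S}
      = (\<integral>\<^sup>+x. indicator S (x 0, x 1, x 2) \<partial>gauss_meas 3)"
    by (subst nn_integral_indicator[symmetric, OF set]) (auto intro!: nn_integral_cong split: split_indicator)
  also have "\<dots> = (\<integral>\<^sup>+a. \<integral>\<^sup>+x. indicator S (a, x 1, x 2) \<partial>PiM (insert (1::nat) {2}) (\<lambda>_. ?N) \<partial>?N)"
    unfolding gauss_meas_def I using meas[of id] by (subst product_nn_integral_insert_rev) auto
  also have "\<dots> = (\<integral>\<^sup>+a. \<integral>\<^sup>+b. \<integral>\<^sup>+x. indicator S (a, b, x 2) \<partial>PiM {2::nat} (\<lambda>_. ?N) \<partial>?N \<partial>?N)"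
    using meas[of "\<lambda>_. _"] by (intro nn_integral_cong, subst product_nn_integral_insert_rev) auto
  also have "\<dots> = (\<integral>\<^sup>+a. \<integral>\<^sup>+b. \<integral>\<^sup>+c. indicator S (a, b, c) \<partial>?N \<partial>?N \<partial>?N)"
    by (intro nn_integral_cong product_nn_integral_singleton) measurable
  finally show ?thesis .
qed

section \<open>Dilations, inradii and cylinders\<close>

lemma sqrt_le_iff_le_power2: "0 \<le> y \<Longrightarrow> sqrt x \<le> y \<longleftrightarrow> x \<le> y\<^sup>2"
  using real_le_lsqrt sqrt_le_D by blast

lemma enorm_2: "enorm 2 x = sqrt ((x 0)\<^sup>2 + (x 1)\<^sup>2)"
  by (simp add: enorm_def numeral_2_eq_2)

lemma enorm_3: "enorm 3 x = sqrt ((x 0)\<^sup>2 + (x 1)\<^sup>2 + (x 2)\<^sup>2)"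
  by (simp add: enorm_def numeral_3_eq_3 numeral_2_eq_2 add.commute add.left_commute)

lemma dil_eq: "t \<noteq> 0 \<Longrightarrow> dil t S = {y. (\<lambda>i. y i / t) \<in> S}"
  unfolding dil_def by (force simp: image_iff)

lemma inradius_eqI:
  assumes "0 < w" "0 < n"
    and inner: "\<And>r. 0 < r \<Longrightarrow> r \<le> w \<Longrightarrow> B2 n r \<subseteq> K"
    and outer: "\<And>r. w < r \<Longrightarrow> (\<lambda>i. if i = 0 then r else 0) \<notin> K"
  shows "inradius n K = w"
proof -
  have "{r. r > 0 \<and> B2 n r \<subseteq> K} = {0<..w}"
  proof (intro set_eqI iffI)
    fix r assume r: "r \<in> {r. r > 0 \<and> B2 n r \<subseteq> K}"
    have "(\<Sum>i<n. (if i = 0 then r else 0)\<^sup>2) = r\<^sup>2"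
      using \<open>0 < n\<close> by (simp add: if_distrib[of "\<lambda>v. v\<^sup>2"] cong: if_cong)
    then have "(\<lambda>i. if i = 0 then r else 0) \<in> B2 n r"
      using r \<open>0 < n\<close> by (simp add: B2_def cball_n_def Rn_def enorm_def)
    then show "r \<in> {0<..w}"
      using r outer[of r] by force
  qed (use inner in auto)
  then show ?thesis
    unfolding inradius_def using \<open>0 < w\<close> by simp
qed

lemma Rn_divide: "t \<noteq> 0 \<Longrightarrow> (\<lambda>i. x i / t) \<in> Rn n \<longleftrightarrow> x \<in> Rn n"
  by (simp add: Rn_def)

lemma sqrt_sum_squares_divide: "0 < t \<Longrightarrow> sqrt ((a / t)\<^sup>2 + (b / t)\<^sup>2) = sqrt (a\<^sup>2 + b\<^sup>2) / t"
  by (simp add: power_divide add_divide_distrib[symmetric] real_sqrt_divide)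

lemma dil_cyl: "0 < t \<Longrightarrow> dil t (cyl n w) = cyl n (t * w)"
  by (auto simp: dil_eq cyl_def enorm_2 Rn_divide sqrt_sum_squares_divide divide_le_eq mult.commute)

lemma inradius_cyl:
  assumes "2 \<le> n" "0 < w"
  shows "inradius n (cyl n w) = w"
proof (rule inradius_eqI)
  show "B2 n r \<subseteq> cyl n w" if "r \<le> w" for r
  proof
    fix x assume "x \<in> B2 n r"
    then have "x \<in> Rn n" "enorm n x \<le> r"
      by (auto simp: B2_def cball_n_def)
    moreover have "enorm 2 x \<le> enorm n x"
      unfolding enorm_def using \<open>2 \<le> n\<close> by (intro real_sqrt_le_mono sum_mono2) auto
    ultimately show "x \<in> cyl n w"
      using that by (simp add: cyl_def)
  qed
qed (use assms in \<open>auto simp: cyl_def enorm_2\<close>)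

lemma gamma_cyl:
  assumes "2 \<le> n"
  shows "gamma n (cyl n w) = gamma 2 (B2 2 w)"
proof -
  define S where "S = {y \<in> space (gauss_meas 2). sqrt ((y 0)\<^sup>2 + (y 1)\<^sup>2) \<le> w}"
  have "Measurable.pred (borel \<Otimes>\<^sub>M borel) (\<lambda>p::real \<times> real. sqrt ((fst p)\<^sup>2 + (snd p)\<^sup>2) \<le> w)"
    by measurable
  then have "{p::real \<times> real. sqrt ((fst p)\<^sup>2 + (snd p)\<^sup>2) \<le> w} \<in> sets (borel \<Otimes>\<^sub>M borel)"
    by (simp add: pred_def space_pair_measure)
  from measurable_sets[OF measurable_gauss_meas_coords_2[OF order_refl] this]
  have "S \<in> sets (gauss_meas 2)"
    by (simp add: S_def vimage_def Int_def conj_commute)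
  moreover have "restrict x {..<2} \<in> space (gauss_meas 2)" if "x \<in> space (gauss_meas n)" for x
    using that assms by (auto simp: gauss_meas_def space_PiM)
  ultimately have "gamma n (cyl n w) = measure (gauss_meas 2) S"
    unfolding gamma_def S_def using assms
    by (subst measure_gauss_meas_restrict[OF assms, symmetric])
      (auto intro!: arg_cong[where f = "measure _"] simp: cyl_def enorm_2 Rn_def)
  also have "\<dots> = gamma 2 (B2 2 w)"
    unfolding gamma_def S_def
    by (intro arg_cong[where f = "measure _"]) (auto simp: B2_def cball_n_def enorm_2 Rn_def)
  finally show ?thesis .
qed

text \<open>The three-dimensional Fubini formula evaluates the cylinder in \<open>\<real>\<^sup>3\<close>;
  \<open>gamma_cyl\<close> transports the value to every dimension.\<close>

lemma gamma_cyl_eq: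
  assumes n: "2 \<le> n" and r: "0 \<le> r"
  shows "gamma n (cyl n r) = 1 - exp (- r\<^sup>2 / 2)"
proof -
  define S where "S = {p :: real \<times> real \<times> real. (fst p)\<^sup>2 + (fst (snd p))\<^sup>2 \<le> r\<^sup>2}"
  have "Measurable.pred (borel \<Otimes>\<^sub>M borel \<Otimes>\<^sub>M borel) (\<lambda>p::real \<times> real \<times> real. (fst p)\<^sup>2 + (fst (snd p))\<^sup>2 \<le> r\<^sup>2)"
    by measurable
  then have S: "S \<in> sets (borel \<Otimes>\<^sub>M borel \<Otimes>\<^sub>M borel)"
    by (simp add: S_def pred_def space_pair_measure)
  have cyl: "{x \<in> space (gauss_meas 3). (\<lambda>i. if i < 3 then x i else 0) \<in> cyl 3 r}
      = {x \<in> space (gauss_meas 3). (x 0, x 1, x 2) \<in> S}"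
    using r by (auto simp: S_def cyl_def enorm_2 Rn_def sqrt_le_iff_le_power2)
  have "emeasure (gauss_meas 3) {x \<in> space (gauss_meas 3). (x 0, x 1, x 2) \<in> S}
      = (\<integral>\<^sup>+a. \<integral>\<^sup>+b. indicator {..r\<^sup>2} (a\<^sup>2 + b\<^sup>2) \<partial>std_normal_distribution \<partial>std_normal_distribution)"
    unfolding emeasure_gauss_meas_3[OF S]
    using std_normal.emeasure_space_1 by (intro nn_integral_cong) (simp add: S_def indicator_def)
  also have "\<dots> = ennreal (1 - exp (- r\<^sup>2 / 2))"
    by (rule nn_integral_std_normal_disc[OF r])
  finally have "gamma 3 (cyl 3 r) = 1 - exp (- r\<^sup>2 / 2)"
    by (simp add: gamma_def cyl measure_def)
  then show ?thesis
    using gamma_cyl[OF n, of r] gamma_cyl[of 3 r] by simp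
qed

section \<open>Truncated double cones\<close>

definition bicone :: "real \<Rightarrow> real \<Rightarrow> real \<Rightarrow> (nat \<Rightarrow> real) set" where
  "bicone m A L = {x \<in> Rn 3. \<bar>x 0\<bar> \<le> L \<and> sqrt ((x 1)\<^sup>2 + (x 2)\<^sup>2) \<le> A - m * \<bar>x 0\<bar>}"

lemma bicone_mono: "A \<le> A' \<Longrightarrow> bicone m A L \<subseteq> bicone m A' L"
  by (auto simp: bicone_def)

lemma symmetric_set_bicone: "symmetric_set (bicone m A L)"
proof -
  have "- x \<in> bicone m A L" if "x \<in> bicone m A L" for x
    using that by (simp add: bicone_def Rn_def)
  then have "uminus ` bicone m A L \<subseteq> bicone m A L"
    by auto
  moreover have "bicone m A L \<subseteq> uminus ` bicone m A L"
    using \<open>\<And>x. x \<in> bicone m A L \<Longrightarrow> - x \<in> bicone m A L\<close> by (force intro: image_eqI[where x = "- _"])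
  ultimately show ?thesis
    unfolding symmetric_set_def by blast
qed

lemma dil_bicone: "0 < t \<Longrightarrow> dil t (bicone m A L) = bicone m (t * A) (t * L)"
proof -
  assume t: "0 < t"
  have "A - m * (\<bar>y 0\<bar> / t) = (t * A - m * \<bar>y 0\<bar>) / t" for y :: "nat \<Rightarrow> real"
    using t by (simp add: field_simps)
  then show ?thesis
    using t by (auto simp: dil_eq bicone_def Rn_divide sqrt_sum_squares_divide divide_le_eq
        divide_le_cancel mult.commute)
qed

lemma convex_n_bicone:
  assumes m: "0 \<le> m"
  shows "convex_n 3 (bicone m A L)"
  unfolding convex_n_def
proof (intro conjI ballI allI impI)
  show "bicone m A L \<subseteq> Rn 3"
    by (auto simp: bicone_def)
  fix x y and u :: real
  assume x: "x \<in> bicone m A L" and y: "y \<in> bicone m A L" and u: "0 \<le> u \<and> u \<le> 1"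
  let ?z = "\<lambda>i. u * x i + (1 - u) * y i"
  let ?a = "u * \<bar>x 0\<bar> + (1 - u) * \<bar>y 0\<bar>"
  have u1: "0 \<le> 1 - u"
    using u by simp
  have z0: "\<bar>?z 0\<bar> \<le> ?a"
    using abs_triangle_ineq[of "u * x 0" "(1 - u) * y 0"] u u1 by (simp add: abs_mult)
  have "?a \<le> u * L + (1 - u) * L"
    using x y u u1 by (intro add_mono mult_left_mono) (auto simp: bicone_def)
  then have zL: "\<bar>?z 0\<bar> \<le> L"
    using z0 by (simp add: algebra_simps)
  have "sqrt ((?z 1)\<^sup>2 + (?z 2)\<^sup>2) \<le> sqrt ((u * x 1)\<^sup>2 + (u * x 2)\<^sup>2) + sqrt (((1 - u) * y 1)\<^sup>2 + ((1 - u) * y 2)\<^sup>2)"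
    by (rule real_sqrt_sum_squares_triangle_ineq)
  also have "\<dots> = u * sqrt ((x 1)\<^sup>2 + (x 2)\<^sup>2) + (1 - u) * sqrt ((y 1)\<^sup>2 + (y 2)\<^sup>2)"
    using u u1 by (simp add: power_mult_distrib distrib_left[symmetric] real_sqrt_mult)
  also have "\<dots> \<le> u * (A - m * \<bar>x 0\<bar>) + (1 - u) * (A - m * \<bar>y 0\<bar>)"
    using x y u u1 by (intro add_mono mult_left_mono) (auto simp: bicone_def)
  also have "\<dots> = A - m * ?a"
    by (simp add: algebra_simps)
  also have "\<dots> \<le> A - m * \<bar>?z 0\<bar>"
    using z0 m by (simp add: mult_left_mono)
  finally show "?z \<in> bicone m A L"
    using x y zL by (simp add: bicone_def Rn_def)
qed

lemma closed_Rn: "closed (Rn n)"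
proof -
  have "Rn n = (\<Inter>i\<in>{n..}. {x. x i = 0})"
    by (auto simp: Rn_def)
  moreover have "closed {x::nat \<Rightarrow> real. x i = 0}" for i
    by (intro closed_Collect_eq continuous_on_product_coordinates continuous_on_const)
  ultimately show ?thesis
    by auto
qed

lemma closed_bicone: "closed (bicone m A L)"
proof -
  have "bicone m A L = Rn 3 \<inter> {x. \<bar>x 0\<bar> \<le> L} \<inter> {x. sqrt ((x 1)\<^sup>2 + (x 2)\<^sup>2) \<le> A - m * \<bar>x 0\<bar>}"
    by (auto simp: bicone_def)
  moreover have "closed {x::nat \<Rightarrow> real. \<bar>x 0\<bar> \<le> L}"
    by (intro closed_Collect_le continuous_intros continuous_on_product_coordinates)
  moreover have "closed {x::nat \<Rightarrow> real. sqrt ((x 1)\<^sup>2 + (x 2)\<^sup>2) \<le> A - m * \<bar>x 0\<bar>}"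
    by (intro closed_Collect_le continuous_intros continuous_on_product_coordinates)
  ultimately show ?thesis
    using closed_Rn by auto
qed

text \<open>The distance from the origin to the lateral surface \<open>\<rho> = A - m \<bar>x\<^sub>0\<bar>\<close> is
  \<open>A / c\<close> with \<open>c = \<surd>(1 + m\<^sup>2)\<close>; this is Cauchy-Schwarz for \<open>(m, 1)\<close> and \<open>(\<bar>x\<^sub>0\<bar>, \<rho>)\<close>.\<close>

lemma B2_subset_bicone:
  assumes c: "c\<^sup>2 = 1 + m\<^sup>2" "0 < c" and m: "0 \<le> m" and r: "r \<le> L" "c * r \<le> A"
  shows "B2 3 r \<subseteq> bicone m A L"
proof
  fix x assume "x \<in> B2 3 r"
  define N where "N = sqrt ((x 0)\<^sup>2 + (x 1)\<^sup>2 + (x 2)\<^sup>2)"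
  define \<rho> where "\<rho> = sqrt ((x 1)\<^sup>2 + (x 2)\<^sup>2)"
  have x: "x \<in> Rn 3" and Nr: "N \<le> r"
    using \<open>x \<in> B2 3 r\<close> by (auto simp: B2_def cball_n_def enorm_3 N_def)
  have N2: "N\<^sup>2 = (x 0)\<^sup>2 + \<rho>\<^sup>2"
    by (simp add: N_def \<rho>_def add.assoc)
  have "sqrt ((x 0)\<^sup>2) \<le> N"
    unfolding N_def by (rule real_sqrt_le_mono) (simp add: add.assoc)
  then have x0: "\<bar>x 0\<bar> \<le> N"
    by simp
  have "(m * \<bar>x 0\<bar> + \<rho>)\<^sup>2 \<le> (c * N)\<^sup>2"
  proof -
    have "(c * N)\<^sup>2 = (1 + m\<^sup>2) * (\<bar>x 0\<bar>\<^sup>2 + \<rho>\<^sup>2)"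
      using N2 c(1) by (simp add: power_mult_distrib)
    then have "(c * N)\<^sup>2 - (m * \<bar>x 0\<bar> + \<rho>)\<^sup>2 = (\<bar>x 0\<bar> - m * \<rho>)\<^sup>2"
      by (simp add: power2_eq_square algebra_simps)
    then show ?thesis
      by (metis diff_ge_0_iff_ge zero_le_power2)
  qed
  then have "m * \<bar>x 0\<bar> + \<rho> \<le> c * N"
    by (rule power2_le_imp_le) (use c in \<open>simp add: N_def\<close>)
  also have "\<dots> \<le> c * r"
    using Nr c by simp
  finally show "x \<in> bicone m A L"
    using x x0 Nr r by (simp add: bicone_def \<rho>_def)
qed

lemma inradius_bicone:
  assumes c: "c\<^sup>2 = 1 + m\<^sup>2" "0 < c" and m: "0 \<le> m" and L: "0 < L" "c * L \<le> A"
  shows "inradius 3 (bicone m A L) = L"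
proof (rule inradius_eqI)
  show "B2 3 r \<subseteq> bicone m A L" if "r \<le> L" for r
  proof (rule B2_subset_bicone[OF c m that])
    show "c * r \<le> A"
      using mult_left_mono[OF that, of c] c L by linarith
  qed
qed (use L in \<open>auto simp: bicone_def\<close>)

lemma convex_body_bicone:
  assumes c: "c\<^sup>2 = 1 + m\<^sup>2" "0 < c" and m: "0 \<le> m" and L: "0 < L" "c * L \<le> A"
  shows "convex_body 3 (bicone m A L)"
  unfolding convex_body_def
proof (intro conjI convex_n_bicone[OF m] closed_bicone bexI exI)
  show "cball_n 3 (\<lambda>_. 0) L \<subseteq> bicone m A L"
    using B2_subset_bicone[OF c m order_refl L(2)] by (simp add: B2_def)
  then show "(\<lambda>_. 0) \<in> bicone m A L"
    using L by (auto simp: cball_n_def Rn_def enorm_def)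
qed (use L in simp)

lemma std_normal_density_complete_square:
  assumes c: "c\<^sup>2 = 1 + m\<^sup>2" "c \<noteq> 0"
  shows "\<phi> a * exp (- (A - m * a)\<^sup>2 / 2) = exp (- (A / c)\<^sup>2 / 2) * \<phi> (c * a - m * A / c)"
proof -
  have "(A / c)\<^sup>2 + (c * a - m * A / c)\<^sup>2 = c\<^sup>2 * a\<^sup>2 - 2 * m * a * A + (1 + m\<^sup>2) * A\<^sup>2 / c\<^sup>2"
    using c(2) by (simp add: power2_eq_square field_simps)
  also have "\<dots> = (1 + m\<^sup>2) * a\<^sup>2 - 2 * m * a * A + A\<^sup>2"
    using c by (simp flip: c(1))
  also have "\<dots> = a\<^sup>2 + (A - m * a)\<^sup>2"
    by (simp add: power2_eq_square algebra_simps)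
  finally have "- a\<^sup>2 / 2 + - (A - m * a)\<^sup>2 / 2 = - (A / c)\<^sup>2 / 2 + - (c * a - m * A / c)\<^sup>2 / 2"
    by (simp add: field_simps)
  then show ?thesis
    unfolding std_normal_density_def by (simp add: mult_exp_exp)
qed

lemma nn_integral_std_normal_density_affine:
  assumes c: "0 < c" and L: "0 \<le> L"
  shows "(\<integral>\<^sup>+a. ennreal (\<phi> (t + c * a)) * indicator {0..L} a \<partial>lborel)
    = ennreal (1 / c) * ennreal (\<Phi> (t + c * L) - \<Phi> t)"
proof -
  have "ennreal (\<Phi> (t + c * L) - \<Phi> t) = (\<integral>\<^sup>+y. ennreal (\<phi> y) * indicator {t..t + c * L} y \<partial>lborel)"
    using measure_std_normal_Icc[of t "t + c * L"] L c
    by (simp add: emeasure_std_normal[symmetric] std_normal.emeasure_eq_measure)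
  also have "\<dots> = ennreal c * (\<integral>\<^sup>+a. ennreal (\<phi> (t + c * a)) * indicator {t..t + c * L} (t + c * a) \<partial>lborel)"
    using nn_integral_real_affine[of "\<lambda>y. ennreal (\<phi> y) * indicator {t..t + c * L} y" c t] c by simp
  also have "\<dots> = ennreal c * (\<integral>\<^sup>+a. ennreal (\<phi> (t + c * a)) * indicator {0..L} a \<partial>lborel)"
    using c by (auto intro!: nn_integral_cong arg_cong2[where f = "(*)"] simp: zero_le_mult_iff
        split: split_indicator)
  finally have "ennreal (1 / c) * ennreal (\<Phi> (t + c * L) - \<Phi> t)
      = (ennreal (1 / c) * ennreal c) * (\<integral>\<^sup>+a. ennreal (\<phi> (t + c * a)) * indicator {0..L} a \<partial>lborel)"
    by (simp add: mult.assoc)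
  also have "ennreal (1 / c) * ennreal c = 1"
    using c by (simp flip: ennreal_mult)
  finally show ?thesis
    by simp
qed

lemma nn_integral_std_normal_cone:
  assumes c: "c\<^sup>2 = 1 + m\<^sup>2" "0 < c" and L: "0 \<le> L"
  shows "(\<integral>\<^sup>+a. indicator {-L..L} a * ennreal (exp (- (A - m * \<bar>a\<bar>)\<^sup>2 / 2)) \<partial>std_normal_distribution)
    = ennreal (2 / c * exp (- (A / c)\<^sup>2 / 2) * (\<Phi> (c * L - m * A / c) - \<Phi> (- (m * A / c))))"
proof -
  define t where "t = - (m * A / c)"
  define E where "E = exp (- (A / c)\<^sup>2 / 2)"
  let ?h = "\<lambda>a. ennreal (\<phi> a) * (indicator {-L..L} a * ennreal (exp (- (A - m * \<bar>a\<bar>)\<^sup>2 / 2)))"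
  have "(\<integral>\<^sup>+a. indicator {-L..L} a * ennreal (exp (- (A - m * \<bar>a\<bar>)\<^sup>2 / 2)) \<partial>std_normal_distribution)
      = (\<integral>\<^sup>+a. ?h a \<partial>lborel)"
    by (rule nn_integral_density) measurable
  also have "\<dots> = 2 * (\<integral>\<^sup>+a. ?h a * indicator {0<..} a \<partial>lborel)"
    by (rule nn_integral_lborel_even) (measurable, auto simp: indicator_def)
  also have "(\<integral>\<^sup>+a. ?h a * indicator {0<..} a \<partial>lborel)
      = (\<integral>\<^sup>+a. ennreal E * (ennreal (\<phi> (t + c * a)) * indicator {0..L} a) \<partial>lborel)"
    by (intro nn_integral_cong_AE, rule eventually_mono[OF AE_lborel_singleton[of 0]])
      (use std_normal_density_complete_square[OF c(1)] c in
        \<open>auto simp: t_def E_def ennreal_mult[symmetric] split: split_indicator\<close>)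
  also have "\<dots> = ennreal E * (ennreal (1 / c) * ennreal (\<Phi> (t + c * L) - \<Phi> t))"
    using c L by (subst nn_integral_cmult) (measurable, simp_all add: nn_integral_std_normal_density_affine)
  also have "2 * \<dots> = ennreal (2 * (E * (1 / c * (\<Phi> (t + c * L) - \<Phi> t))))"
  proof -
    have "0 \<le> E" "0 \<le> 1 / c"
      using c by (simp_all add: E_def)
    then show ?thesis
      by (simp only: ennreal_mult'[OF zero_le_numeral] ennreal_mult' ennreal_numeral)
  qed
  also have "2 * (E * (1 / c * (\<Phi> (t + c * L) - \<Phi> t)))
      = 2 / c * exp (- (A / c)\<^sup>2 / 2) * (\<Phi> (c * L - m * A / c) - \<Phi> (- (m * A / c)))"
    by (simp add: t_def E_def add.commute)
  finally show ?thesis .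
qed

lemma (in finite_measure) nn_integral_indicator_one_minus:
  assumes I [measurable]: "I \<in> sets M" and [measurable]: "e \<in> borel_measurable M" and e: "\<And>x. 0 \<le> e x" "\<And>x. e x \<le> 1"
    and R: "(\<integral>\<^sup>+x. indicator I x * ennreal (e x) \<partial>M) = ennreal R" "0 \<le> R"
  shows "R \<le> measure M I"
    and "(\<integral>\<^sup>+x. indicator I x * ennreal (1 - e x) \<partial>M) = ennreal (measure M I - R)"
proof -
  let ?X = "\<integral>\<^sup>+x. indicator I x * ennreal (1 - e x) \<partial>M"
  have "?X + ennreal R = (\<integral>\<^sup>+x. indicator I x * ennreal (1 - e x) + indicator I x * ennreal (e x) \<partial>M)"
    unfolding R(1)[symmetric] by (rule nn_integral_add[symmetric]) measurable
  also have "\<dots> = emeasure M I"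
    using I e by (auto intro!: nn_integral_cong simp: distrib_left[symmetric] ennreal_plus[symmetric]
        simp del: ennreal_plus)
  finally have sum: "?X + ennreal R = ennreal (measure M I)"
    by (simp add: emeasure_eq_measure)
  have "ennreal R \<le> ennreal (measure M I)"
    unfolding sum[symmetric] by (rule add_increasing) simp_all
  then show "R \<le> measure M I"
    using ennreal_le_iff measure_nonneg by blast
  have "?X + ennreal R - ennreal R = ?X"
    by (rule ennreal_add_diff_cancel_right) simp
  then have "?X = ennreal (measure M I) - ennreal R"
    unfolding sum by simp
  also have "\<dots> = ennreal (measure M I - R)"
    by (rule ennreal_minus[OF R(2)])
  finally show "?X = ennreal (measure M I - R)" .
qed

lemma gamma_mono:
  assumes "K \<subseteq> K'" "{x \<in> space (gauss_meas n). (\<lambda>i. if i < n then x i else 0) \<in> K'} \<in> sets (gauss_meas n)"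
  shows "gamma n K \<le> gamma n K'"
proof -
  interpret prob_space "gauss_meas n"
    by (rule prob_space_gauss_meas)
  show ?thesis
    unfolding gamma_def using assms by (intro finite_measure_mono) auto
qed

lemma sets_bicone_coords:
  "{p :: real \<times> real \<times> real. \<bar>fst p\<bar> \<le> L \<and> (fst (snd p))\<^sup>2 + (snd (snd p))\<^sup>2 \<le> (A - m * \<bar>fst p\<bar>)\<^sup>2}
    \<in> sets (borel \<Otimes>\<^sub>M borel \<Otimes>\<^sub>M borel)"
proof -
  have "Measurable.pred (borel \<Otimes>\<^sub>M borel \<Otimes>\<^sub>M borel) (\<lambda>p::real \<times> real \<times> real.
      \<bar>fst p\<bar> \<le> L \<and> (fst (snd p))\<^sup>2 + (snd (snd p))\<^sup>2 \<le> (A - m * \<bar>fst p\<bar>)\<^sup>2)"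
    by measurable
  then show ?thesis
    by (simp add: pred_def space_pair_measure)
qed

lemma bicone_preimage:
  assumes m: "0 \<le> m" and L: "m * L \<le> A"
  shows "{x \<in> space (gauss_meas 3). (\<lambda>i. if i < 3 then x i else 0) \<in> bicone m A L}
    = {x \<in> space (gauss_meas 3). (x 0, x 1, x 2) \<in>
        {p. \<bar>fst p\<bar> \<le> L \<and> (fst (snd p))\<^sup>2 + (snd (snd p))\<^sup>2 \<le> (A - m * \<bar>fst p\<bar>)\<^sup>2}}"
proof -
  have "0 \<le> A - m * \<bar>a\<bar>" if "\<bar>a\<bar> \<le> L" for a
    using mult_left_mono[OF that m] L by linarith
  then show ?thesis
    by (auto simp: bicone_def Rn_def sqrt_le_iff_le_power2)
qed

lemma sets_gauss_meas_bicone: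
  assumes "0 \<le> m" "m * L \<le> A"
  shows "{x \<in> space (gauss_meas 3). (\<lambda>i. if i < 3 then x i else 0) \<in> bicone m A L} \<in> sets (gauss_meas 3)"
  unfolding bicone_preimage[OF assms]
  using measurable_sets[OF measurable_gauss_meas_coords_3 sets_bicone_coords]
  by (simp add: vimage_def Int_def conj_commute)

lemma emeasure_gauss_meas_bicone:
  assumes m: "0 \<le> m" and L: "m * L \<le> A"
  shows "emeasure (gauss_meas 3) {x \<in> space (gauss_meas 3). (\<lambda>i. if i < 3 then x i else 0) \<in> bicone m A L}
    = (\<integral>\<^sup>+a. indicator {-L..L} a * ennreal (1 - exp (- (A - m * \<bar>a\<bar>)\<^sup>2 / 2)) \<partial>std_normal_distribution)"
  unfolding bicone_preimage[OF m L] emeasure_gauss_meas_3[OF sets_bicone_coords]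
proof (intro nn_integral_cong)
  fix a :: real
  let ?S = "{p :: real \<times> real \<times> real. \<bar>fst p\<bar> \<le> L \<and> (fst (snd p))\<^sup>2 + (snd (snd p))\<^sup>2 \<le> (A - m * \<bar>fst p\<bar>)\<^sup>2}"
  show "(\<integral>\<^sup>+b. \<integral>\<^sup>+c. indicator ?S (a, b, c) \<partial>std_normal_distribution \<partial>std_normal_distribution)
      = indicator {-L..L} a * ennreal (1 - exp (- (A - m * \<bar>a\<bar>)\<^sup>2 / 2))"
  proof (cases "\<bar>a\<bar> \<le> L")
    case True
    then have "0 \<le> A - m * \<bar>a\<bar>"
      using mult_left_mono[OF True m] L by linarith
    moreover have "(\<integral>\<^sup>+b. \<integral>\<^sup>+c. indicator ?S (a, b, c) \<partial>std_normal_distribution \<partial>std_normal_distribution)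
        = (\<integral>\<^sup>+b. \<integral>\<^sup>+c. indicator {..(A - m * \<bar>a\<bar>)\<^sup>2} (b\<^sup>2 + c\<^sup>2)
          \<partial>std_normal_distribution \<partial>std_normal_distribution)"
      using True by (intro nn_integral_cong) (simp add: indicator_def)
    ultimately show ?thesis
      using nn_integral_std_normal_disc True by (simp add: abs_le_iff)
  next
    case False
    then have "indicator ?S (a, b, c) = (0 :: ennreal)" for b c :: real
      by simp
    then show ?thesis
      using False by (auto simp: abs_le_iff indicator_def)
  qed
qed

lemma gamma_bicone:
  assumes c: "c\<^sup>2 = 1 + m\<^sup>2" "0 < c" and m: "0 \<le> m" and L: "0 \<le> L" "m * L \<le> A"
  shows "gamma 3 (bicone m A L)
    = (\<Phi> L - \<Phi> (- L)) - 2 / c * exp (- (A / c)\<^sup>2 / 2) * (\<Phi> (c * L - m * A / c) - \<Phi> (- (m * A / c)))"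
proof -
  define R where "R = 2 / c * exp (- (A / c)\<^sup>2 / 2) * (\<Phi> (c * L - m * A / c) - \<Phi> (- (m * A / c)))"
  have "\<Phi> (- (m * A / c)) \<le> \<Phi> (c * L - m * A / c)"
    using c L by (intro std_normal.cdf_nondecreasing) simp
  then have R: "0 \<le> R"
    unfolding R_def using c by (intro mult_nonneg_nonneg) auto
  note one_minus = std_normal.nn_integral_indicator_one_minus[where I = "{-L..L}"
      and e = "\<lambda>a. exp (- (A - m * \<bar>a\<bar>)\<^sup>2 / 2)", OF _ _ _ _ nn_integral_std_normal_cone[OF c L(1)]]
  have "emeasure (gauss_meas 3) {x \<in> space (gauss_meas 3). (\<lambda>i. if i < 3 then x i else 0) \<in> bicone m A L}
      = ennreal (\<Phi> L - \<Phi> (- L) - R)"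
    using one_minus(2) R L by (simp add: emeasure_gauss_meas_bicone[OF m L(2)] measure_std_normal_Icc R_def)
  moreover have "R \<le> \<Phi> L - \<Phi> (- L)"
    using one_minus(1) R L by (simp add: measure_std_normal_Icc R_def)
  ultimately show ?thesis
    by (simp add: gamma_def measure_def R_def)
qed

section \<open>The counterexample\<close>

lemma sqrt_2pi_bounds: "5 / 2 \<le> sqrt (2 * pi)" "sqrt (2 * pi) \<le> 25067 / 10000"
proof -
  have "(5 / 2)\<^sup>2 \<le> 2 * pi"
    using pi_approx(1) by (simp add: power2_eq_square)
  then show "5 / 2 \<le> sqrt (2 * pi)"
    by (rule real_le_rsqrt)
  have "2 * pi \<le> (25067 / 10000)\<^sup>2"
    using pi_approx(2) by (simp add: power2_eq_square)
  then show "sqrt (2 * pi) \<le> 25067 / 10000"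
    by (rule real_le_lsqrt[rotated]) simp
qed

lemma exp_minus_2_le: "exp (- 2 :: real) \<le> 1372 / 10000"
proof -
  have "27 / 10 \<le> exp (1 :: real)"
    using e_approx_32 by (simp add: abs_if split: if_splits)
  then have "27 / 10 * (27 / 10) \<le> exp (1 :: real) * exp 1"
    by (intro mult_mono) auto
  then have "729 / 100 \<le> exp (2 :: real)"
    by (simp flip: exp_add)
  then show ?thesis
    by (simp add: exp_minus field_simps)
qed

text \<open>The slope \<open>15/8\<close> comes from the Pythagorean triple \<open>(8, 15, 17)\<close>, which makes
  \<open>c = \<surd>(1 + m\<^sup>2) = 17/8\<close> rational.\<close>

lemma gamma_bicone_slope_15_8:
  assumes "0 \<le> L" "15 / 8 * L \<le> A"
  shows "gamma 3 (bicone (15 / 8) A L)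
    = (\<Phi> L - \<Phi> (- L)) - 16 / 17 * exp (- (8 * A / 17)\<^sup>2 / 2) * (\<Phi> (17 / 8 * L - 15 * A / 17) - \<Phi> (- (15 * A / 17)))"
  using gamma_bicone[of "17 / 8" "15 / 8" L A] assms by (simp add: power2_eq_square)

lemma gamma_bicone_17_8_le: "gamma 3 (bicone (15 / 8) 17 8) \<le> 1 - exp (- 32)"
proof -
  define s where "s = sqrt (2 * pi)"
  define E where "E = exp (- 2 :: real)"
  let ?e = "exp (- 32 :: real)"
  have s: "5 / 2 \<le> s" "s \<le> 25067 / 10000"
    using sqrt_2pi_bounds by (auto simp: s_def)
  have E: "E \<le> 1372 / 10000" "0 < E"
    using exp_minus_2_le by (auto simp: E_def)
  have "\<phi> 15 \<le> E / s"
    using s by (simp add: std_normal_density_def s_def E_def divide_right_mono)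
  moreover have "1 - \<Phi> 2 \<le> \<phi> 2 / 2" "1 - \<Phi> 15 \<le> \<phi> 15 / 15"
    by (rule std_normal_tail_upper, simp)+
  moreover have "\<phi> 2 = E / s"
    by (simp add: std_normal_density_def s_def E_def)
  ultimately have lower: "1 - (E / s) / 2 - (E / s) / 15 \<le> \<Phi> 2 - \<Phi> (- 15)"
    by (simp add: Phi_minus divide_right_mono)
  have "\<phi> 8 = ?e / s"
    by (simp add: std_normal_density_def s_def)
  then have upper: "\<Phi> 8 - \<Phi> (- 8) \<le> 1 - 2 * (?e / s) * (63 / 512)"
    using Phi_diff_Phi_minus_le[of 8] by simp
  have "16 / 17 * ?e * (1 - (E / s) / 2 - (E / s) / 15) \<le> 16 / 17 * ?e * (\<Phi> 2 - \<Phi> (- 15))"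
    using lower by (intro mult_left_mono) auto
  moreover have "gamma 3 (bicone (15 / 8) 17 8) = (\<Phi> 8 - \<Phi> (- 8)) - 16 / 17 * ?e * (\<Phi> 2 - \<Phi> (- 15))"
    by (simp add: gamma_bicone_slope_15_8)
  ultimately have "gamma 3 (bicone (15 / 8) 17 8) \<le> 1 - 2 * (?e / s) * (63 / 512) - 16 / 17 * ?e * (1 - (E / s) / 2 - (E / s) / 15)"
    using upper by linarith
  also have "\<dots> \<le> 1 - ?e"
  proof -
    have "s / 17 \<le> 63 / 256 - (16 / 30) * E"
      using s E by simp
    then have "?e * (s / 17) \<le> ?e * (63 / 256 - (16 / 30) * E)"
      by (intro mult_left_mono) auto
    then have "?e * s \<le> 2 * ?e * (63 / 512) + 16 / 17 * ?e * (s - E / 2 - E / 15)"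
      by (simp add: field_simps)
    then have "?e * s / s \<le> (2 * ?e * (63 / 512) + 16 / 17 * ?e * (s - E / 2 - E / 15)) / s"
      using s by (intro divide_right_mono) auto
    moreover have "?e * s / s = ?e"
      using s by simp
    moreover have "(2 * ?e * (63 / 512) + 16 / 17 * ?e * (s - E / 2 - E / 15)) / s
        = 2 * (?e / s) * (63 / 512) + 16 / 17 * ?e * (1 - (E / s) / 2 - (E / s) / 15)"
      using s by (simp add: field_simps)
    ultimately show ?thesis
      by linarith
  qed
  finally show ?thesis .
qed

lemma gamma_bicone_25_8_ge: "1 - exp (- 32) \<le> gamma 3 (bicone (15 / 8) 25 8)"
proof -
  define s where "s = sqrt (2 * pi)"
  let ?e = "exp (- 32 :: real)"
  let ?f = "exp (- (8 * 25 / 17)\<^sup>2 / 2 :: real)"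
  have s: "5 / 2 \<le> s"
    using sqrt_2pi_bounds by (auto simp: s_def)
  have "\<phi> 8 = ?e / s"
    by (simp add: std_normal_density_def s_def)
  then have a: "1 - 2 * (?e / s) / 8 \<le> \<Phi> 8 - \<Phi> (- 8)"
    using Phi_diff_Phi_minus_ge[of 8] by simp
  have "\<Phi> (17 / 8 * 8 - 15 * 25 / 17) - \<Phi> (- (15 * 25 / 17)) \<le> 1"
    using std_normal.cdf_bounded_prob[of "17 / 8 * 8 - 15 * 25 / 17"] std_normal.cdf_nonneg[of "- (15 * 25 / 17)"]
    by linarith
  then have b: "16 / 17 * ?f * (\<Phi> (17 / 8 * 8 - 15 * 25 / 17) - \<Phi> (- (15 * 25 / 17))) \<le> 16 / 17 * ?f"
    by (intro mult_left_le) auto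
  have "?f \<le> exp (- 33)"
    by (simp add: power_divide)
  also have "exp (- 33 :: real) = ?e * exp (- 1)"
    by (simp flip: exp_add)
  also have "\<dots> \<le> ?e * (1 / 2)"
    using exp_ge_add_one_self[of 1] by (intro mult_left_mono) (auto simp: exp_minus field_simps)
  finally have f: "?f \<le> ?e / 2"
    by simp
  have "2 * (?e / s) / 8 \<le> ?e / 10"
    using s by (simp add: field_simps)
  moreover have "gamma 3 (bicone (15 / 8) 25 8)
      = (\<Phi> 8 - \<Phi> (- 8)) - 16 / 17 * ?f * (\<Phi> (17 / 8 * 8 - 15 * 25 / 17) - \<Phi> (- (15 * 25 / 17)))"
    by (simp add: gamma_bicone_slope_15_8)
  ultimately show ?thesis
    using a b f exp_ge_zero[of "- 32"] by linarith
qed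

lemma continuous_on_gamma_bicone: "continuous_on {17..25} (\<lambda>A. gamma 3 (bicone (15 / 8) A 8))"
proof -
  have "isCont (\<lambda>A. (\<Phi> 8 - \<Phi> (- 8)) - 16 / 17 * exp (- (8 * A / 17)\<^sup>2 / 2)
      * (\<Phi> (17 / 8 * 8 - 15 * A / 17) - \<Phi> (- (15 * A / 17)))) A" for A
    by (intro continuous_intros isCont_o2[OF _ isCont_Phi]) simp_all
  then have "continuous_on {17..25} (\<lambda>A. (\<Phi> 8 - \<Phi> (- 8)) - 16 / 17 * exp (- (8 * A / 17)\<^sup>2 / 2)
      * (\<Phi> (17 / 8 * 8 - 15 * A / 17) - \<Phi> (- (15 * A / 17))))"
    by (intro continuous_at_imp_continuous_on) auto
  then show ?thesis
    by (rule continuous_on_cong[THEN iffD1, rotated 2]) (auto simp: gamma_bicone_slope_15_8)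
qed

lemma exists_bicone_gamma_eq_cyl: "\<exists>A\<ge>17. gamma 3 (bicone (15 / 8) A 8) = gamma 3 (cyl 3 8)"
  using IVT'[OF gamma_bicone_17_8_le gamma_bicone_25_8_ge _ continuous_on_gamma_bicone] gamma_cyl_eq[of 3 8]
  by auto

lemma gamma_bicone_51_3_gt: "1 - exp (- (9 / 2)) < gamma 3 (bicone (15 / 8) (51 / 8) 3)"
proof -
  define s where "s = sqrt (2 * pi)"
  define P :: real where "P = 3 / 4 - (3 / 4) ^ 3 / 6 + (3 / 4) ^ 5 / 40"
  let ?e = "exp (- (9 / 2) :: real)"
  have s: "5 / 2 \<le> s"
    using sqrt_2pi_bounds by (auto simp: s_def)
  have "\<phi> 3 = ?e / s"
    by (simp add: std_normal_density_def s_def)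
  then have a: "1 - 2 * (?e / s) / 3 \<le> \<Phi> 3 - \<Phi> (- 3)"
    using Phi_diff_Phi_minus_ge[of 3] by simp
  have "\<Phi> (3 / 4) - \<Phi> (- (45 / 8)) \<le> 1 / 2 + P / s"
    using Phi_le_Taylor[of "3 / 4"] std_normal.cdf_nonneg[of "- (45 / 8)"] by (simp add: P_def s_def)
  then have b: "16 / 17 * ?e * (\<Phi> (3 / 4) - \<Phi> (- (45 / 8))) \<le> 16 / 17 * ?e * (1 / 2 + P / s)"
    by (intro mult_left_mono) auto
  have "gamma 3 (bicone (15 / 8) (51 / 8) 3) = (\<Phi> 3 - \<Phi> (- 3)) - 16 / 17 * ?e * (\<Phi> (3 / 4) - \<Phi> (- (45 / 8)))"
    by (simp add: gamma_bicone_slope_15_8 power2_eq_square)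
  then have lower: "1 - 2 * (?e / s) / 3 - 16 / 17 * ?e * (1 / 2 + P / s) \<le> gamma 3 (bicone (15 / 8) (51 / 8) 3)"
    using a b by linarith
  have "1 - ?e < 1 - 2 * (?e / s) / 3 - 16 / 17 * ?e * (1 / 2 + P / s)"
  proof -
    have "2 / 3 + 16 / 17 * P < 9 / 17 * s"
      using s by (simp add: P_def power_divide)
    then have "?e * (2 / 3 + 16 / 17 * P) / s < ?e * (9 / 17 * s) / s"
      using s by (intro divide_strict_right_mono mult_strict_left_mono) auto
    moreover have "?e * (9 / 17 * s) / s = 9 / 17 * ?e"
      using s by simp
    moreover have "?e * (2 / 3 + 16 / 17 * P) / s = 2 * (?e / s) / 3 + 16 / 17 * ?e * (P / s)"
      using s by (simp add: field_simps)
    ultimately have "2 * (?e / s) / 3 + 16 / 17 * ?e * (P / s) < 9 / 17 * ?e"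
      by linarith
    moreover have "16 / 17 * ?e * (1 / 2 + P / s) = 8 / 17 * ?e + 16 / 17 * ?e * (P / s)"
      by (simp add: algebra_simps)
    ultimately show ?thesis
      by linarith
  qed
  also have "\<dots> \<le> gamma 3 (bicone (15 / 8) (51 / 8) 3)"
    by (fact lower)
  finally show ?thesis .
qed

lemma gamma_dil_cyl_less_dil_bicone:
  assumes "17 \<le> A"
  shows "gamma 3 (dil (3 / 8) (cyl 3 8)) < gamma 3 (dil (3 / 8) (bicone (15 / 8) A 8))"
proof -
  have "gamma 3 (dil (3 / 8) (cyl 3 8)) = 1 - exp (- (9 / 2))"
    using dil_cyl[of "3 / 8" 3 8] gamma_cyl_eq[of 3 3] by (simp add: power2_eq_square)
  also have "\<dots> < gamma 3 (bicone (15 / 8) (51 / 8) 3)"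
    by (rule gamma_bicone_51_3_gt)
  also have "\<dots> \<le> gamma 3 (bicone (15 / 8) (3 / 8 * A) 3)"
    using assms by (intro gamma_mono bicone_mono sets_gauss_meas_bicone) auto
  also have "\<dots> = gamma 3 (dil (3 / 8) (bicone (15 / 8) A 8))"
    by (simp add: dil_bicone)
  finally show ?thesis .
qed

theorem mainTheorem10:
  shows "\<exists>w::real. w > 0 \<and> (\<exists>n::nat. n \<ge> 3 \<and> (\<exists>K t. convex_body n K \<and> symmetric_set K
      \<and> 0 < t \<and> t < 1
      \<and> inradius n K = w
      \<and> gamma n K = gamma n (cyl n w)
      \<and> inradius n (cyl n w) = w
      \<and> gamma n (dil t (cyl n w)) = gamma 2 (B2 2 (t * w))
      \<and> gamma n (dil t K) > gamma n (dil t (cyl n w))))"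
proof -
  obtain A where A: "17 \<le> A" "gamma 3 (bicone (15 / 8) A 8) = gamma 3 (cyl 3 8)"
    using exists_bicone_gamma_eq_cyl by blast
  define K where "K = bicone (15 / 8) A 8"
  define t :: real where "t = 3 / 8"
  have c: "(17 / 8)\<^sup>2 = 1 + (15 / 8 :: real)\<^sup>2"
    by (simp add: power2_eq_square)
  have "convex_body 3 K" "inradius 3 K = 8"
    unfolding K_def using A by (auto intro!: convex_body_bicone[OF c] inradius_bicone[OF c])
  moreover have "gamma 3 (dil t (cyl 3 8)) = gamma 2 (B2 2 (t * 8))"
    using dil_cyl[of t 3 8] gamma_cyl[of 3 "t * 8"] by (simp add: t_def)
  ultimately have "convex_body 3 K \<and> symmetric_set K \<and> 0 < t \<and> t < 1 \<and> inradius 3 K = 8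
      \<and> gamma 3 K = gamma 3 (cyl 3 8) \<and> inradius 3 (cyl 3 8) = 8
      \<and> gamma 3 (dil t (cyl 3 8)) = gamma 2 (B2 2 (t * 8))
      \<and> gamma 3 (dil t K) > gamma 3 (dil t (cyl 3 8))"
    using A symmetric_set_bicone inradius_cyl[of 3 8] gamma_dil_cyl_less_dil_bicone[OF A(1)]
    by (simp add: K_def t_def)
  then show ?thesis
    by (intro exI[of _ "8 :: real"] conjI exI[of _ "3 :: nat"]) auto
qed

end
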